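(* Let $M,n\geq 3$ be integers with $n$ odd, and let $\beta$ be an integer with $0\leq\beta\leq n$ and $\beta\neq 1$. Then $(n-\beta,\beta)\in \mathrm{HWP}(C_M[n];M,Mn)$; that is, $C_M[n]$ can be factorized into $n-\beta$ $C_M$-factors and $\beta$ $C_{Mn}$-factors.
   Context: $C_M[n]$ denotes the lexicographic product of the $M$-cycle with the empty graph on $n$ vertices: vertex set $\mathbb Z_M\times\mathbb Z_n$, with $(i,x)(j,y)$ an edge iff $j-i\equiv\pm1\pmod M$. A $C_k$-factor of a graph $G$ is a spanning subgraph of $G$ all of whose components are cycles of length $k$. For a graph $G$ and integers $M,N\ge3$, $\mathrm{HWP}(G;M,N)$ is the set of pairs $(\alpha,\beta)$ of nonnegative integers such that $G$ admits a set of $\alpha$ $C_M$-factors and $\beta$ $C_N$-factors whose edge sets partition $E(G)$. *)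

theory Defs
  imports Main
begin

text \<open>Graphs are given by a vertex set V and a set E of edges, each edge being a
two-element set of vertices.\<close>

definition cycle_edges :: "'a list \<Rightarrow> 'a set set" where
  "cycle_edges vs = {{vs ! t, vs ! (Suc t mod length vs)} | t. t < length vs}"

definition is_cycle_factor :: "'a set \<Rightarrow> 'a set set \<Rightarrow> nat \<Rightarrow> 'a set set \<Rightarrow> bool" where
  "is_cycle_factor V E k F \<longleftrightarrow> F \<subseteq> E \<and>
     (\<exists>Cs :: 'a list set.
        (\<forall>c\<in>Cs. distinct c \<and> length c = k \<and> set c \<subseteq> V) \<and>
        (\<forall>c\<in>Cs. \<forall>d\<in>Cs. c \<noteq> d \<longrightarrow> set c \<inter> set d = {}) \<and>
        (\<Union>c\<in>Cs. set c) = V \<and>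
        F = (\<Union>c\<in>Cs. cycle_edges c))"

definition HWP :: "'a set \<Rightarrow> 'a set set \<Rightarrow> nat \<Rightarrow> nat \<Rightarrow> (nat \<times> nat) set" where
  "HWP V E M N = {(\<alpha>, \<beta>). \<exists>Fs :: nat \<Rightarrow> 'a set set.
       (\<forall>i<\<alpha>. is_cycle_factor V E M (Fs i)) \<and>
       (\<forall>i. \<alpha> \<le> i \<and> i < \<alpha> + \<beta> \<longrightarrow> is_cycle_factor V E N (Fs i)) \<and>
       (\<forall>i<\<alpha> + \<beta>. \<forall>j<\<alpha> + \<beta>. i \<noteq> j \<longrightarrow> Fs i \<inter> Fs j = {}) \<and>
       (\<Union>i<\<alpha> + \<beta>. Fs i) = E}"

text \<open>The lexicographic product C_M[n]: vertices Z_M x Z_n (as pairs of naturals below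
M resp. n); (i,x)(j,y) is an edge iff j - i = +-1 (mod M).\<close>
definition CMn_vertices :: "nat \<Rightarrow> nat \<Rightarrow> (nat \<times> nat) set" where
  "CMn_vertices M n = {0..<M} \<times> {0..<n}"

definition CMn_edges :: "nat \<Rightarrow> nat \<Rightarrow> (nat \<times> nat) set set" where
  "CMn_edges M n = {{(i, x), (j, y)} | i x j y.
      i < M \<and> x < n \<and> j < M \<and> y < n \<and>
      ((j + M - i) mod M = 1 \<or> (j + M - i) mod M = M - 1)}"

end

theory Submission
  imports Defs "HOL-Number_Theory.Cong"
begin

text \<open>Between the layers i and i + 1 of C_M[n] the edges join (i, y) to (i + 1, y + d), d in Z_n.
  Choose a permutation A_i of Z_n for every layer and let the k-th factor consist of the edges
  with d = A_i(k): these n factors partition the edges, and the k-th one is the graph of the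
  bijection (i, y) \<mapsto> (i + 1, y + A_i(k)). Going once around the M layers adds
  s_k = \<Sum>_i A_i(k) to the second coordinate, so the factor is a C_M-factor if s_k = 0 and
  a Hamilton cycle if s_k is a unit in Z_n.

  Let A_0 fix the first n - \<beta> points and move each of the last \<beta> points by +1, -1 or -2
  (a 3-cycle and transpositions, which needs \<beta> \<noteq> 1), and let the other A_i be
  multiplications by units adding up to -1. Then s_k = A_0(k) - k, which is 0 for
  k < n - \<beta> and 1, -1 or -2, a unit for odd n, otherwise.\<close>

section \<open>Cycle factors from closed walks\<close>

lemma cycle_edges_closed_walk:
  assumes "\<forall>t<length c. c ! (Suc t mod length c) = f (c ! t)"
  shows "cycle_edges c = (\<lambda>v. {v, f v}) ` set c"
proof -
  have "cycle_edges c = (\<lambda>t. {c ! t, c ! (Suc t mod length c)}) ` {..<length c}"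
    unfolding cycle_edges_def by blast
  also have "\<dots> = (\<lambda>t. {c ! t, f (c ! t)}) ` {..<length c}"
    using assms by (intro image_cong) auto
  also have "\<dots> = (\<lambda>v. {v, f v}) ` set c"
    by (auto simp: set_conv_nth image_iff)
  finally show ?thesis .
qed

lemma is_cycle_factor_closed_walks:
  assumes "(\<lambda>v. {v, f v}) ` V \<subseteq> E"
    and "\<forall>c\<in>Cs. distinct c \<and> length c = L \<and> set c \<subseteq> V"
    and "\<forall>c\<in>Cs. \<forall>d\<in>Cs. c \<noteq> d \<longrightarrow> set c \<inter> set d = {}"
    and "(\<Union>c\<in>Cs. set c) = V"
    and "\<forall>c\<in>Cs. \<forall>t<length c. c ! (Suc t mod length c) = f (c ! t)"
  shows "is_cycle_factor V E L ((\<lambda>v. {v, f v}) ` V)"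
proof -
  have "(\<Union>c\<in>Cs. cycle_edges c) = (\<Union>c\<in>Cs. (\<lambda>v. {v, f v}) ` set c)"
    by (rule SUP_cong[OF refl]) (use assms(5) cycle_edges_closed_walk in blast)
  also have "\<dots> = (\<lambda>v. {v, f v}) ` V"
    using assms(4) by blast
  finally show ?thesis
    unfolding is_cycle_factor_def using assms(1-4) by (intro conjI exI[of _ Cs]) auto
qed

section \<open>The edges of C_M[n]\<close>

lemma mod_add_diff_eq_if:
  fixes i j M :: nat
  assumes "i < M" "j < M"
  shows "(j + M - i) mod M = (if i \<le> j then j - i else j + M - i)"
proof (cases "i \<le> j")
  case True
  then obtain d where "j = i + d" using le_Suc_ex by blast
  then show ?thesis using assms by simp
qed (use assms in simp)

lemma CMn_edges_eq:
  assumes "M \<ge> 2"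
  shows "CMn_edges M n = {{(i, x), (Suc i mod M, y)} | i x y. i < M \<and> x < n \<and> y < n}"
proof -
  have succ: "(j + M - i) mod M = 1 \<longleftrightarrow> j = Suc i mod M"
    and pred: "(j + M - i) mod M = M - 1 \<longleftrightarrow> i = Suc j mod M"
    if "i < M" "j < M" for i j
    using that assms by (auto simp: mod_add_diff_eq_if mod_Suc)
  show ?thesis
  proof (intro antisym subsetI)
    fix e assume "e \<in> CMn_edges M n"
    then obtain i x j y where e: "e = {(i, x), (j, y)}" "i < M" "x < n" "j < M" "y < n"
      and "(j + M - i) mod M = 1 \<or> (j + M - i) mod M = M - 1"
      unfolding CMn_edges_def by blast
    then have "j = Suc i mod M \<or> i = Suc j mod M"
      using succ pred by blast
    then show "e \<in> {{(i, x), (Suc i mod M, y)} | i x y. i < M \<and> x < n \<and> y < n}"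
    proof
      assume "j = Suc i mod M"
      then show ?thesis using e by blast
    next
      assume "i = Suc j mod M"
      then have "e = {(j, y), (Suc j mod M, x)}"
        using e(1) by (simp add: insert_commute)
      then show ?thesis using e by blast
    qed
  next
    fix e assume "e \<in> {{(i, x), (Suc i mod M, y)} | i x y. i < M \<and> x < n \<and> y < n}"
    then obtain i x y where "e = {(i, x), (Suc i mod M, y)}" "i < M" "x < n" "y < n"
      by blast
    moreover have "Suc i mod M < M" "(Suc i mod M + M - i) mod M = 1"
      using succ[of i "Suc i mod M"] \<open>i < M\<close> assms by simp_all
    ultimately show "e \<in> CMn_edges M n"
      unfolding CMn_edges_def by blast
  qed
qed

lemma Suc_Suc_mod_neq:
  fixes i M :: nat
  assumes "M \<ge> 3"
  shows "Suc (Suc i mod M) mod M \<noteq> i mod M"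
proof
  assume "Suc (Suc i mod M) mod M = i mod M"
  then have "[i + 2 = i + 0] (mod M)"
    by (simp add: cong_def mod_Suc_eq)
  then have "M dvd 2"
    by (simp only: cong_add_lcancel_nat cong_0_iff)
  then show False
    using assms by (auto dest: dvd_imp_le)
qed

lemma mod_add_mod_complement:
  fixes y s n :: nat
  assumes "y < n"
  shows "((y + (n - s mod n)) mod n + s) mod n = y"
proof -
  have "((y + (n - s mod n)) mod n + s) mod n = (y + (n - s mod n) + s mod n) mod n"
    by (simp add: mod_add_left_eq mod_add_right_eq)
  also have "y + (n - s mod n) + s mod n = y + n"
    using assms mod_less_divisor[of n s] by linarith
  finally show ?thesis
    using assms by simp
qed

section \<open>Factorizations of C_M[n] by layer permutations\<close>

locale layered_permutations =
  fixes M n :: nat and A :: "nat \<Rightarrow> nat \<Rightarrow> nat"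
  assumes M_ge_3: "M \<ge> 3" and n_pos: "n > 0"
    and bij_A: "\<And>i. i < M \<Longrightarrow> bij_betw (A i) {..<n} {..<n}"
begin

definition step :: "nat \<Rightarrow> nat \<times> nat \<Rightarrow> nat \<times> nat" where
  "step k = (\<lambda>(i, y). (Suc i mod M, (y + A i k) mod n))"

definition factor :: "nat \<Rightarrow> (nat \<times> nat) set set" where
  "factor k = (\<lambda>v. {v, step k v}) ` CMn_vertices M n"

definition shift :: "nat \<Rightarrow> nat \<Rightarrow> nat" where
  "shift k i = (\<Sum>j<i. A j k)"

text \<open>The t-th iterate of step k starting at (0, x), in closed form.\<close>
definition walk :: "nat \<Rightarrow> nat \<Rightarrow> nat \<Rightarrow> nat \<times> nat" where
  "walk k x t = (t mod M, (x + t div M * shift k M + shift k (t mod M)) mod n)"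

lemma A_less: "i < M \<Longrightarrow> k < n \<Longrightarrow> A i k < n"
  using bij_betwE[OF bij_A] by blast

lemma A_inj: "i < M \<Longrightarrow> k < n \<Longrightarrow> k' < n \<Longrightarrow> A i k = A i k' \<Longrightarrow> k = k'"
  using inj_onD[OF bij_betw_imp_inj_on[OF bij_A]] by blast

lemma A_surj:
  assumes "i < M" "d < n"
  shows "\<exists>k<n. A i k = d"
proof -
  have "d \<in> A i ` {..<n}"
    using bij_betw_imp_surj_on[OF bij_A[OF assms(1)]] assms(2) by simp
  then show ?thesis
    by auto
qed

lemma factor_subset_edges: "factor k \<subseteq> CMn_edges M n"
proof
  fix e assume "e \<in> factor k"
  then obtain v where "v \<in> CMn_vertices M n" "e = {v, step k v}"
    unfolding factor_def by blast
  then obtain i y where e: "e = {(i, y), step k (i, y)}" "i < M" "y < n"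
    unfolding CMn_vertices_def by auto
  have "M \<ge> 2" "(y + A i k) mod n < n"
    using M_ge_3 n_pos by simp_all
  then have "{(i, y), (Suc i mod M, (y + A i k) mod n)} \<in> CMn_edges M n"
    unfolding CMn_edges_eq[OF \<open>M \<ge> 2\<close>] using e
    by (intro CollectI exI[of _ i] exI[of _ y] exI[of _ "(y + A i k) mod n"] conjI refl)
  then show "e \<in> CMn_edges M n"
    using e by (simp add: step_def)
qed

lemma factors_disjoint:
  assumes "k < n" "k' < n" "k \<noteq> k'"
  shows "factor k \<inter> factor k' = {}"
proof (rule ccontr)
  assume "factor k \<inter> factor k' \<noteq> {}"
  then obtain v w where v: "v \<in> CMn_vertices M n" and "w \<in> CMn_vertices M n"
    and eq: "{v, step k v} = {w, step k' w}"
    unfolding factor_def by blast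
  obtain i y where iy: "v = (i, y)" "i < M" "y < n"
    using v by (auto simp: CMn_vertices_def)
  from eq consider "v = w" "step k v = step k' w" | "v = step k' w" "w = step k v"
    by (metis doubleton_eq_iff)
  then show False
  proof cases
    case 1
    then have "step k (i, y) = step k' (i, y)"
      using iy by simp
    then have "[A i k = A i k'] (mod n)"
      by (simp add: step_def cong_def[symmetric] cong_add_lcancel_nat)
    then have "A i k = A i k'"
      using cong_less_modulus_unique_nat A_less iy(2) assms(1,2) by blast
    then show False
      using A_inj iy(2) assms by blast
  next
    case 2
    then have "Suc (Suc i mod M) mod M = i mod M"
      using iy by (simp add: step_def)
    then show False
      using Suc_Suc_mod_neq[OF M_ge_3] by blast
  qed
qed

lemma Union_factors: "(\<Union>k<n. factor k) = CMn_edges M n"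
proof (intro antisym subsetI)
  fix e assume "e \<in> CMn_edges M n"
  then obtain i x y where e: "e = {(i, x), (Suc i mod M, y)}" "i < M" "x < n" "y < n"
    using M_ge_3 by (auto simp: CMn_edges_eq)
  have "(y + (n - x mod n)) mod n < n"
    using n_pos by simp
  then obtain k where k: "k < n" "A i k = (y + (n - x mod n)) mod n"
    using A_surj \<open>i < M\<close> by blast
  have "(x + A i k) mod n = y"
    using mod_add_mod_complement[OF \<open>y < n\<close>, of x] k by (simp add: add.commute)
  then have "e = {(i, x), step k (i, x)}"
    using e by (simp add: step_def)
  then have "e \<in> factor k"
    unfolding factor_def CMn_vertices_def using e by (intro image_eqI[of _ _ "(i, x)"]) auto
  with \<open>k < n\<close> show "e \<in> (\<Union>k<n. factor k)"
    by blast
qed (use factor_subset_edges in blast)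

lemma walk_in_vertices: "walk k x t \<in> CMn_vertices M n"
  using M_ge_3 n_pos by (simp add: walk_def CMn_vertices_def)

lemma walk_less: "t < M \<Longrightarrow> walk k x t = (t, (x + shift k t) mod n)"
  by (simp add: walk_def)

lemma shift_0 [simp]: "shift k 0 = 0"
  by (simp add: shift_def)

lemma walk_0: "walk k x 0 = (0, x mod n)"
  by (simp add: walk_def shift_def)

lemma walk_Suc: "walk k x (Suc t) = step k (walk k x t)"
proof -
  define q r where "q = t div M" and "r = t mod M"
  have "r < M"
    using M_ge_3 by (simp add: r_def)
  have "step k (walk k x t) = (Suc r mod M, (x + q * shift k M + shift k (Suc r)) mod n)"
    by (simp add: step_def walk_def q_def r_def shift_def mod_add_left_eq add.assoc)
  also have "\<dots> = walk k x (Suc t)"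
  proof (cases "Suc r = M")
    case True
    then have "Suc t mod M = 0" "Suc t div M = Suc q"
      by (simp_all add: mod_Suc div_Suc q_def r_def)
    then show ?thesis
      using True by (simp add: walk_def shift_def algebra_simps)
  next
    case False
    then have "Suc t mod M = Suc r" "Suc t div M = q"
      by (simp_all add: mod_Suc div_Suc q_def r_def)
    then show ?thesis
      using \<open>r < M\<close> False by (simp add: walk_def)
  qed
  finally show ?thesis ..
qed

lemma walk_add_period: "walk k x (t + M * n) = walk k x t"
proof -
  have "(t + M * n) mod M = t mod M" "(t + M * n) div M = t div M + n"
    using M_ge_3 by simp_all
  moreover have "x + (t div M + n) * shift k M + shift k (t mod M)
      = x + t div M * shift k M + shift k (t mod M) + shift k M * n"
    by (simp add: algebra_simps)
  ultimately show ?thesis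
    by (simp only: walk_def mod_mult_self1)
qed

lemma closed_walk_step:
  assumes "walk k x L = walk k x 0" "t < L"
  shows "walk k x (Suc t mod L) = step k (walk k x t)"
proof -
  have "walk k x (Suc t mod L) = walk k x (Suc t)"
    using assms by (cases "Suc t = L") auto
  then show ?thesis
    by (simp add: walk_Suc)
qed

lemma factor_cycles_M:
  assumes "shift k M mod n = 0"
  shows "is_cycle_factor (CMn_vertices M n) (CMn_edges M n) M (factor k)"
proof -
  let ?c = "\<lambda>x. map (walk k x) [0..<M]"
  have closed: "walk k x M = walk k x 0" for x
  proof -
    have "(x + shift k M) mod n = x mod n"
      using assms mod_add_right_eq[of x "shift k M" n] by simp
    then show ?thesis
      using M_ge_3 by (simp add: walk_def walk_0)
  qed
  show ?thesis
    unfolding factor_def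
  proof (rule is_cycle_factor_closed_walks[where Cs = "?c ` {..<n}"])
    show "(\<lambda>v. {v, step k v}) ` CMn_vertices M n \<subseteq> CMn_edges M n"
      using factor_subset_edges by (simp add: factor_def)
    show "\<forall>c\<in>?c ` {..<n}. distinct c \<and> length c = M \<and> set c \<subseteq> CMn_vertices M n"
      using n_pos by (auto simp: distinct_map inj_on_def walk_less CMn_vertices_def)
    show "\<forall>c\<in>?c ` {..<n}. \<forall>d\<in>?c ` {..<n}. c \<noteq> d \<longrightarrow> set c \<inter> set d = {}"
    proof (intro ballI impI)
      fix c d assume "c \<in> ?c ` {..<n}" "d \<in> ?c ` {..<n}" "c \<noteq> d"
      then obtain x x' where x: "x < n" "x' < n" "c = ?c x" "d = ?c x'" "x \<noteq> x'"
        by auto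
      have "(x + shift k t) mod n \<noteq> (x' + shift k t) mod n" for t
      proof
        assume "(x + shift k t) mod n = (x' + shift k t) mod n"
        then have "[x = x'] (mod n)"
          by (simp add: cong_def[symmetric] cong_add_rcancel_nat)
        then show False
          using x cong_less_modulus_unique_nat by blast
      qed
      then show "set c \<inter> set d = {}"
        using x by (auto simp: walk_less)
    qed
    show "(\<Union>c\<in>?c ` {..<n}. set c) = CMn_vertices M n"
    proof (intro antisym subsetI)
      fix v assume "v \<in> CMn_vertices M n"
      then obtain i y where v: "v = (i, y)" "i < M" "y < n"
        by (auto simp: CMn_vertices_def)
      define x where "x = (y + (n - shift k i mod n)) mod n"
      have "x < n" "walk k x i = v"
        using v n_pos mod_add_mod_complement by (simp_all add: x_def walk_less)
      then have "?c x \<in> ?c ` {..<n}" "v \<in> set (?c x)"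
        using \<open>i < M\<close> by (auto intro: image_eqI[of _ _ i])
      then show "v \<in> (\<Union>c\<in>?c ` {..<n}. set c)"
        by blast
    qed (auto simp: walk_in_vertices)
    show "\<forall>c\<in>?c ` {..<n}. \<forall>t<length c. c ! (Suc t mod length c) = step k (c ! t)"
      using closed closed_walk_step by auto
  qed
qed

lemma factor_cycle_Mn:
  assumes "coprime (shift k M) n"
  shows "is_cycle_factor (CMn_vertices M n) (CMn_edges M n) (M * n) (factor k)"
proof -
  let ?c = "map (walk k 0) [0..<M * n]"
  have "inj_on (walk k 0) {0..<M * n}"
  proof (rule inj_onI)
    fix t t' assume t: "t \<in> {0..<M * n}" "t' \<in> {0..<M * n}" and eq: "walk k 0 t = walk k 0 t'"
    then have r: "t mod M = t' mod M"
      by (simp add: walk_def)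
    with eq have "[t div M * shift k M + shift k (t mod M) = t' div M * shift k M + shift k (t mod M)] (mod n)"
      by (simp add: walk_def cong_def)
    then have "[t div M = t' div M] (mod n)"
      using assms cong_add_rcancel_nat cong_mult_rcancel_nat by blast
    moreover have "t div M < n" "t' div M < n"
      using t by (auto simp: less_mult_imp_div_less mult.commute)
    ultimately have "t div M = t' div M"
      using cong_less_modulus_unique_nat by blast
    with r show "t = t'"
      by (metis div_mult_mod_eq)
  qed
  then have distinct: "distinct ?c"
    by (simp add: distinct_map)
  have "set ?c \<subseteq> CMn_vertices M n"
    using walk_in_vertices by auto
  moreover have "card (set ?c) = card (CMn_vertices M n)"
    using distinct distinct_card by (fastforce simp: CMn_vertices_def)
  ultimately have cover: "set ?c = CMn_vertices M n"
    by (simp add: CMn_vertices_def card_subset_eq)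
  show ?thesis
    unfolding factor_def
  proof (rule is_cycle_factor_closed_walks[where Cs = "{?c}"])
    show "(\<lambda>v. {v, step k v}) ` CMn_vertices M n \<subseteq> CMn_edges M n"
      using factor_subset_edges by (simp add: factor_def)
    show "\<forall>c\<in>{?c}. \<forall>t<length c. c ! (Suc t mod length c) = step k (c ! t)"
      using walk_add_period[of k 0 0] closed_walk_step M_ge_3 n_pos by simp
  qed (use distinct cover in auto)
qed

lemma HWP_if_shifts:
  assumes "\<alpha> \<le> n"
    and "\<And>k. k < \<alpha> \<Longrightarrow> shift k M mod n = 0"
    and "\<And>k. \<alpha> \<le> k \<Longrightarrow> k < n \<Longrightarrow> coprime (shift k M) n"
  shows "(\<alpha>, n - \<alpha>) \<in> HWP (CMn_vertices M n) (CMn_edges M n) M (M * n)"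
  unfolding HWP_def
  using assms factor_cycles_M factor_cycle_Mn factors_disjoint Union_factors
  by (intro CollectI case_prodI exI[of _ factor]) auto

end

section \<open>The layer permutations\<close>

lemma coprime_if_cong_small:
  fixes p n :: nat and e :: int
  assumes "odd n" "[int p = e] (mod int n)" "e \<in> {1, -1, -2}"
  shows "coprime p n"
proof -
  have "coprime e (int n)"
    using assms(1,3) by auto
  then have "coprime (int p) (int n)"
    using assms(2) cong_sym cong_imp_coprime by blast
  then show ?thesis
    by simp
qed

lemma coprime_if_add_cong_near:
  fixes p k d n :: nat
  assumes "odd n" "[p + k = d] (mod n)" "d = k + 1 \<or> d + 1 = k \<or> d + 2 = k"
  shows "coprime p n"
proof (rule coprime_if_cong_small[OF assms(1)])
  have "[int p + int k = int d] (mod int n)"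
    using assms(2) by (simp add: cong_int_iff flip: of_nat_add)
  then have "[int p + int k - int k = int d - int k] (mod int n)"
    by (rule cong_diff) (rule cong_refl)
  then show "[int p = int d - int k] (mod int n)"
    by simp
  show "int d - int k \<in> {1, -1, -2}"
    using assms(3) by auto
qed

lemma bij_betw_mult_mod:
  fixes c n :: nat
  assumes "coprime c n"
  shows "bij_betw (\<lambda>k. c * k mod n) {..<n} {..<n}"
proof -
  have "inj_on (\<lambda>k. c * k mod n) {..<n}"
  proof (rule inj_onI)
    fix x y assume "x \<in> {..<n}" "y \<in> {..<n}" "c * x mod n = c * y mod n"
    then have "[x = y] (mod n)"
      using assms by (simp add: cong_def[symmetric] cong_mult_lcancel_nat)
    then show "x = y"
      using \<open>x \<in> {..<n}\<close> \<open>y \<in> {..<n}\<close> cong_less_modulus_unique_nat by blast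
  qed
  moreover have "(\<lambda>k. c * k mod n) ` {..<n} \<subseteq> {..<n}"
    by auto
  ultimately show ?thesis
    unfolding bij_betw_def using endo_inj_surj by blast
qed

definition short_derangement :: "nat \<Rightarrow> nat \<Rightarrow> nat" where
  "short_derangement \<beta> j =
     (if odd \<beta> \<and> j < 3 then (j + 1) mod 3 else if even (j + \<beta>) then j + 1 else j - 1)"

lemma short_derangement_less: "\<beta> \<noteq> 1 \<Longrightarrow> j < \<beta> \<Longrightarrow> short_derangement \<beta> j < \<beta>"
  unfolding short_derangement_def by presburger

lemma short_derangement_moves:
  "\<beta> \<noteq> 1 \<Longrightarrow> j < \<beta> \<Longrightarrow> short_derangement \<beta> j = j + 1 \<or>
     short_derangement \<beta> j + 1 = j \<or> short_derangement \<beta> j + 2 = j"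
  unfolding short_derangement_def by presburger

lemma short_derangement_inj:
  "j < \<beta> \<Longrightarrow> j' < \<beta> \<Longrightarrow> short_derangement \<beta> j = short_derangement \<beta> j' \<Longrightarrow> j = j'"
  unfolding short_derangement_def by (auto split: if_splits; presburger)

definition tail_derangement :: "nat \<Rightarrow> nat \<Rightarrow> nat \<Rightarrow> nat" where
  "tail_derangement n \<beta> k =
     (if k < n - \<beta> then k else n - \<beta> + short_derangement \<beta> (k - (n - \<beta>)))"

lemma tail_derangement_fixed: "k < n - \<beta> \<Longrightarrow> tail_derangement n \<beta> k = k"
  by (simp add: tail_derangement_def)

lemma tail_derangement_moves:
  assumes "\<beta> \<noteq> 1" "n - \<beta> \<le> k" "k < n"
  shows "tail_derangement n \<beta> k = k + 1 \<or> tail_derangement n \<beta> k + 1 = k \<or>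
    tail_derangement n \<beta> k + 2 = k"
proof -
  define j where "j = k - (n - \<beta>)"
  have "j < \<beta>" "k = n - \<beta> + j"
    using assms by (simp_all add: j_def)
  moreover have "tail_derangement n \<beta> k = n - \<beta> + short_derangement \<beta> j"
    using assms by (simp add: tail_derangement_def j_def)
  ultimately show ?thesis
    using short_derangement_moves[OF assms(1) \<open>j < \<beta>\<close>] by arith
qed

lemma tail_derangement_bij:
  assumes "\<beta> \<le> n" "\<beta> \<noteq> 1"
  shows "bij_betw (tail_derangement n \<beta>) {..<n} {..<n}"
proof -
  have tail: "k - (n - \<beta>) < \<beta>" if "k < n" "\<not> k < n - \<beta>" for k
    using that by linarith
  have "tail_derangement n \<beta> k < n" if "k < n" for k
  proof (cases "k < n - \<beta>")
    case False
    then have "short_derangement \<beta> (k - (n - \<beta>)) < \<beta>"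
      using short_derangement_less[OF assms(2) tail[OF that]] by blast
    then show ?thesis
      using False assms(1) by (simp add: tail_derangement_def)
  qed (simp add: tail_derangement_def)
  then have "tail_derangement n \<beta> ` {..<n} \<subseteq> {..<n}"
    by auto
  moreover have "inj_on (tail_derangement n \<beta>) {..<n}"
  proof (rule inj_onI)
    fix k k' assume "k \<in> {..<n}" "k' \<in> {..<n}" "tail_derangement n \<beta> k = tail_derangement n \<beta> k'"
    then show "k = k'"
      using short_derangement_inj[OF tail tail, of k k']
      by (auto simp: tail_derangement_def split: if_splits)
  qed
  ultimately show ?thesis
    unfolding bij_betw_def using endo_inj_surj by blast
qed

text \<open>n - 2 and n - 1 represent the units -2 and -1 of Z_n.\<close>
definition multiplier :: "nat \<Rightarrow> nat \<Rightarrow> nat \<Rightarrow> nat" where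
  "multiplier n M j = (if j = 0 then (if odd M then n - 2 else n - 1) else if odd j then 1 else n - 1)"

lemma sum_multiplier_lessThan:
  assumes "n \<ge> 1" "m \<ge> 1"
  shows "(\<Sum>j<m. multiplier n M j) = multiplier n M 0 + (m - 1) div 2 * n + (if even m then 1 else 0)"
  using assms(2)
proof (induction m rule: nat_induct_at_least)
  case (Suc m)
  have "even m \<Longrightarrow> m div 2 = Suc ((m - 1) div 2)" "odd m \<Longrightarrow> (m - 1) div 2 = m div 2"
    using \<open>m \<ge> 1\<close> by presburger+
  then show ?case
    using Suc assms(1) by (cases "even m") (auto simp: multiplier_def)
qed simp

lemma sum_multiplier_cong:
  assumes "n \<ge> 2" "M \<ge> 2"
  shows "[(\<Sum>j<M - 1. multiplier n M j) = n - 1] (mod n)"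
proof -
  have "even (M - 1) \<longleftrightarrow> odd M"
    using assms(2) by presburger
  then have "multiplier n M 0 + (if even (M - 1) then 1 else 0) = n - 1"
    using assms(1) by (auto simp: multiplier_def)
  then have "(\<Sum>j<M - 1. multiplier n M j) = n - 1 + (M - 1 - 1) div 2 * n"
    using sum_multiplier_lessThan[of n "M - 1" M] assms by linarith
  then show ?thesis
    by (simp add: cong_def)
qed

lemma coprime_multiplier:
  assumes "odd n" "n \<ge> 3"
  shows "coprime (multiplier n M j) n"
proof -
  have "[int (n - 1) = -1] (mod int n)" "[int (n - 2) = -2] (mod int n)"
    using assms by (simp_all add: cong_iff_dvd_diff of_nat_diff)
  then show ?thesis
    using coprime_if_cong_small[OF assms(1)] by (auto simp: multiplier_def)
qed

definition layer_perm :: "nat \<Rightarrow> nat \<Rightarrow> nat \<Rightarrow> nat \<Rightarrow> nat \<Rightarrow> nat" where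
  "layer_perm n M \<beta> i k =
     (if i = 0 then tail_derangement n \<beta> k else multiplier n M (i - 1) * k mod n)"

lemma layer_perm_bij:
  assumes "odd n" "n \<ge> 3" "\<beta> \<le> n" "\<beta> \<noteq> 1"
  shows "bij_betw (layer_perm n M \<beta> i) {..<n} {..<n}"
  using tail_derangement_bij[OF assms(3,4)] bij_betw_mult_mod[OF coprime_multiplier[OF assms(1,2)]]
  by (cases "i = 0") (simp_all add: layer_perm_def[abs_def])

lemma sum_layer_perm_cong:
  assumes "n \<ge> 2" "M \<ge> 2"
  shows "[(\<Sum>i<M. layer_perm n M \<beta> i k) + k = tail_derangement n \<beta> k] (mod n)"
proof -
  define S where "S = (\<Sum>j<M - 1. multiplier n M j * k mod n)"
  have M: "M = Suc (M - 1)"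
    using assms(2) by simp
  have split: "(\<Sum>i<M. layer_perm n M \<beta> i k) = tail_derangement n \<beta> k + S"
    unfolding S_def by (subst M, subst sum.lessThan_Suc_shift) (simp add: layer_perm_def)
  have "[S = (\<Sum>j<M - 1. multiplier n M j) * k] (mod n)"
    unfolding S_def sum_distrib_right by (rule cong_sum) (simp add: cong_def)
  also have "[(\<Sum>j<M - 1. multiplier n M j) * k = (n - 1) * k] (mod n)"
    using sum_multiplier_cong[OF assms] by (rule cong_mult) (rule cong_refl)
  finally have "[S + k = (n - 1) * k + k] (mod n)"
    by (rule cong_add) (rule cong_refl)
  also have "(n - 1) * k + k = n * k"
    using assms(1) by (cases n) simp_all
  also have "[n * k = 0] (mod n)"
    by (simp add: cong_0_iff)
  finally have "[tail_derangement n \<beta> k + (S + k) = tail_derangement n \<beta> k + 0] (mod n)"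
    by (rule cong_add[OF cong_refl])
  then show ?thesis
    by (simp add: split add.assoc)
qed

theorem mainTheorem3:
  fixes M n \<beta> :: nat
  assumes "M \<ge> 3" and "n \<ge> 3" and "odd n"
    and "\<beta> \<le> n" and "\<beta> \<noteq> 1"
  shows "(n - \<beta>, \<beta>) \<in> HWP (CMn_vertices M n) (CMn_edges M n) M (M * n)"
proof -
  interpret layered_permutations M n "layer_perm n M \<beta>"
    using assms layer_perm_bij by unfold_locales auto
  have shift_cong: "[shift k M + k = tail_derangement n \<beta> k] (mod n)" for k
    unfolding shift_def using sum_layer_perm_cong assms(1,2) by simp
  have "(n - \<beta>, n - (n - \<beta>)) \<in> HWP (CMn_vertices M n) (CMn_edges M n) M (M * n)"
  proof (rule HWP_if_shifts)
    show "shift k M mod n = 0" if "k < n - \<beta>" for k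
    proof -
      have "[shift k M + k = k] (mod n)"
        using shift_cong[of k] tail_derangement_fixed[OF that] by simp
      then show ?thesis
        by (simp add: cong_add_rcancel_0_nat cong_0_iff mod_eq_0_iff_dvd)
    qed
    show "coprime (shift k M) n" if "n - \<beta> \<le> k" "k < n" for k
      using coprime_if_add_cong_near[OF assms(3) shift_cong]
        tail_derangement_moves[OF assms(5) that] .
  qed simp
  then show ?thesis
    using assms(4) by simp
qed

end
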